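(* Let the polynomials $A_h(z)$, $h\ge 0$, be defined by $A_0(z)=z$, $A_1(z)=z^2$ and $A_{h+2}(z)=A_{h+1}(z)\bigl(A_{h+1}(z)+2A_h(z)\bigr)$ for all $h\ge 0$. For each $h$, let $\alpha_h$ be the unique positive real solution of $A_h(z)=1/3$. Let $a_n$ be the coefficient of $z^n$ in the formal power series $A(z)=\sum_{h\ge 0}A_h(z)$. Then the limit $\alpha=\lim_{h\to\infty}\alpha_h=0.5219\ldots$ exists, and \[\log_2(a_n)=n\log_2(\alpha^{-1})+\log\theta(n),\qquad n\log_2(\alpha^{-1})=n(0.938\ldots),\] for a function $\theta$ growing at most sub-exponentially, i.e. $\theta(n)=o(\kappa^n)$ for every $\kappa>1$.
   Context: $A_h(z)$ is the generating function of AVL trees of height $h$ (binary trees in which the subtrees of any node differ in height by at most one), with the conventions used by the recursion and initial conditions given; $A(z)$ is the generating function of all AVL trees and $a_n$ its counting sequence. Each $A_h$ is a non-constant polynomial with non-negative coefficients, so $A_h(z)=1/3$ has a unique positive solution. *)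

theory Defs
  imports "HOL-Computational_Algebra.Polynomial" "HOL-Library.Landau_Symbols"
begin

fun avlA :: "nat \<Rightarrow> real poly" where
  "avlA 0 = [:0, 1:]"
| "avlA (Suc 0) = [:0, 0, 1:]"
| "avlA (Suc (Suc h)) = avlA (Suc h) * (avlA (Suc h) + smult 2 (avlA h))"

definition avl_alpha :: "nat \<Rightarrow> real" where
  "avl_alpha h = (THE z. z > 0 \<and> poly (avlA h) z = 1/3)"

text \<open>a_n: coefficient of z^n in the formal power series A(z) = sum over h of A_h(z)
  (the coefficientwise sum; only finitely many h contribute for each n).\<close>
definition avl_a :: "nat \<Rightarrow> real" where
  "avl_a n = (\<Sum>h. coeff (avlA h) n)"

end

theory Submission
  imports Defs
begin

(* For fixed z > 0 the values x_h = A_h(z) obey x_(h+2) = x_(h+1) (x_(h+1) + 2 x_h), whose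
   fixed point is 1/3. Once two consecutive values lie below 1/3 the sequence decays
   geometrically (z is subcritical); once two consecutive values lie above 1/3 it stays above
   1/3 forever (z is supercritical). For z < w the ratio A_h(w) / A_h(z) is at least
   (w/z)^(h+1), while a sequence that is neither subcritical nor supercritical stays in
   [min z (1/9), 1]; hence z is subcritical or w is supercritical. So the supremum alpha of the
   subcritical points separates the two regimes, and alpha_h, the point where A_h crosses 1/3,
   tends to alpha. For subcritical s the series of the A_h(s) converges and bounds a_n s^n;
   letting s tend to alpha gives a_n alpha^n = O(rho^n) for every rho > 1, which is the
   subexponential growth of theta. The numerical bounds come from iterating the recurrence with
   rational bounds at 0.5219 and 0.52191. *)

abbreviation A :: "nat \<Rightarrow> real \<Rightarrow> real" where
  "A h z \<equiv> poly (avlA h) z"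

lemma poly_avlA_pos: "0 < z \<Longrightarrow> 0 < A h z"
  by (induction h rule: avlA.induct) auto

lemma poly_avlA_nonneg: "0 \<le> z \<Longrightarrow> 0 \<le> A h z"
  by (induction h rule: avlA.induct) auto

lemma poly_avlA_0: "A h 0 = 0"
  by (induction h rule: avlA.induct) auto

lemma poly_avlA_1_ge: "1 \<le> A h 1"
proof (induction h rule: avlA.induct)
  case (3 h)
  have "1 \<le> A (Suc h) 1 + 2 * A h 1"
    using "3.IH" poly_avlA_nonneg[of 1 h] by simp
  with "3.IH"(2) have "1 * 1 \<le> A (Suc h) 1 * (A (Suc h) 1 + 2 * A h 1)"
    by (intro mult_mono) auto
  then show ?case by simp
qed auto

lemma poly_avlA_strict_mono: "0 \<le> z \<Longrightarrow> z < w \<Longrightarrow> A h z < A h w"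
proof (induction h rule: avlA.induct)
  case 2
  then show ?case by (simp add: mult_strict_mono)
next
  case (3 h)
  then have "A (Suc h) z < A (Suc h) w" "A h z < A h w" by auto
  moreover have "0 \<le> A (Suc h) z" "0 \<le> A h z"
    using poly_avlA_nonneg "3.prems" by auto
  ultimately show ?case by (simp add: mult_strict_mono add_strict_mono)
qed simp

lemma poly_avlA_mono: "0 \<le> z \<Longrightarrow> z \<le> w \<Longrightarrow> A h z \<le> A h w"
  using poly_avlA_strict_mono[of z w h] by (cases "z = w") auto

lemma poly_avlA_Suc_ge_square: "0 \<le> z \<Longrightarrow> A h z ^ 2 \<le> A (Suc h) z"
proof (cases h)
  case (Suc k)
  assume "0 \<le> z"
  then have "0 \<le> A (Suc k) z" "0 \<le> A k z" using poly_avlA_nonneg by auto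
  then show ?thesis using Suc by (simp add: power2_eq_square mult_left_mono)
qed (simp add: power2_eq_square)

lemma poly_avlA_scale:
  assumes "1 \<le> q" "0 \<le> z"
  shows "q ^ (h + 1) * A h z \<le> A h (q * z)"
proof (induction h rule: avlA.induct)
  case 2
  show ?case by (simp add: power2_eq_square algebra_simps)
next
  case (3 h)
  have IH: "q ^ (h + 2) * A (Suc h) z \<le> A (Suc h) (q * z)" "q ^ (h + 1) * A h z \<le> A h (q * z)"
    using "3.IH" by simp_all
  have pow: "q \<le> q ^ (h + 2)" "q \<le> q ^ (h + 1)"
    using power_increasing[of 1 "h + 2" q] power_increasing[of 1 "h + 1" q] assms(1)
    by simp_all
  have nonneg: "0 \<le> A (Suc h) z" "0 \<le> A h z" "0 \<le> A (Suc h) (q * z)" "0 \<le> q"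
    using poly_avlA_nonneg assms by auto
  have "q * A (Suc h) z \<le> q ^ (h + 2) * A (Suc h) z" "q * A h z \<le> q ^ (h + 1) * A h z"
    using pow nonneg by (simp_all add: mult_right_mono)
  moreover have "q * (A (Suc h) z + 2 * A h z) = q * A (Suc h) z + 2 * (q * A h z)"
    by (simp add: algebra_simps)
  ultimately have sum: "q * (A (Suc h) z + 2 * A h z) \<le> A (Suc h) (q * z) + 2 * A h (q * z)"
    using IH by linarith
  have "q ^ (Suc (Suc h) + 1) * A (Suc (Suc h)) z
      = (q ^ (h + 2) * A (Suc h) z) * (q * (A (Suc h) z + 2 * A h z))"
    by (simp add: algebra_simps)
  also have "\<dots> \<le> A (Suc h) (q * z) * (A (Suc h) (q * z) + 2 * A h (q * z))"
    using IH(1) sum nonneg by (intro mult_mono) auto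
  also have "\<dots> = A (Suc (Suc h)) (q * z)"
    by simp
  finally show ?case .
qed (simp add: algebra_simps)

lemma avl_alpha_unique: "\<exists>!z. 0 < z \<and> A h z = 1/3"
proof -
  obtain z where z: "0 \<le> z" "z \<le> 1" "A h z = 1/3"
    using IVT[of "A h" 0 "1/3" 1] poly_avlA_0[of h] poly_avlA_1_ge[of h] by auto
  then have "z \<noteq> 0" using poly_avlA_0[of h] by auto
  moreover have "w = z" if "0 < w" "A h w = 1/3" for w
    using poly_avlA_strict_mono[of w z h] poly_avlA_strict_mono[of z w h] z that
    by (cases w z rule: linorder_cases) auto
  ultimately show ?thesis using z by (intro ex1I[of _ z]) auto
qed

lemma avl_alpha: "0 < avl_alpha h" "A h (avl_alpha h) = 1/3"
  using theI'[OF avl_alpha_unique[of h]] unfolding avl_alpha_def by auto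

lemma less_avl_alphaI: "0 \<le> z \<Longrightarrow> A h z < 1/3 \<Longrightarrow> z < avl_alpha h"
  using poly_avlA_mono[of "avl_alpha h" z h] avl_alpha[of h] by force

lemma avl_alpha_lessI: "0 \<le> z \<Longrightarrow> 1/3 < A h z \<Longrightarrow> avl_alpha h < z"
  using poly_avlA_mono[of z "avl_alpha h" h] avl_alpha[of h] by force

definition subcritical :: "real \<Rightarrow> bool" where
  "subcritical z \<longleftrightarrow> (\<exists>h. A h z < 1/3 \<and> A (Suc h) z < 1/3)"

definition supercritical :: "real \<Rightarrow> bool" where
  "supercritical z \<longleftrightarrow> (\<exists>h. 1/3 < A h z \<and> 1/3 < A (Suc h) z)"

lemma poly_avlA_geometric_decay:
  assumes z: "0 < z" and m: "A h z \<le> m" "A (Suc h) z \<le> m" "m \<le> 1/3"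
  shows "A (h + k) z \<le> m \<and> A (h + k + 1) z \<le> m * (3 * m) ^ k"
proof (induction k)
  case (Suc k)
  have pos: "0 < A (h + k) z" "0 < A (h + k + 1) z" using poly_avlA_pos z by auto
  then have "0 \<le> m" using Suc by linarith
  moreover have "(3 * m) ^ k \<le> 1"
    using \<open>0 \<le> m\<close> m(3) by (intro power_le_one) auto
  ultimately have "m * (3 * m) ^ k \<le> m"
    by (rule mult_left_le[rotated])
  then have next_le: "A (h + k + 1) z \<le> m" using Suc by linarith
  have "A (h + k + 2) z = A (h + k + 1) z * (A (h + k + 1) z + 2 * A (h + k) z)"
    by (simp add: numeral_2_eq_2)
  also have "\<dots> \<le> (m * (3 * m) ^ k) * (3 * m)"
    using Suc next_le pos \<open>0 \<le> m\<close> by (intro mult_mono) auto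
  finally show ?case using next_le by (simp add: mult_ac)
qed (use m in simp)

lemma subcritical_geometric_decay:
  assumes "0 < z" "subcritical z"
  obtains h m where "0 \<le> m" "m < 1/3" "\<And>k. A (h + k) z \<le> m \<and> A (h + k + 1) z \<le> m * (3 * m) ^ k"
proof -
  obtain h where h: "A h z < 1/3" "A (Suc h) z < 1/3"
    using assms(2) by (auto simp: subcritical_def)
  define m where "m = max (A h z) (A (Suc h) z)"
  have m: "A h z \<le> m" "A (Suc h) z \<le> m" "m < 1/3" "0 \<le> m"
    using h poly_avlA_pos[OF assms(1), of h] by (auto simp: m_def)
  then show ?thesis
    using poly_avlA_geometric_decay[OF assms(1) m(1,2)] that[of m h] by simp
qed

lemma subcritical_eventually_below:
  assumes "0 < z" "subcritical z"
  shows "eventually (\<lambda>h. A h z < 1/3) sequentially"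
proof -
  obtain h m where m: "m < 1/3" and decay: "\<And>k. A (h + k) z \<le> m"
    using subcritical_geometric_decay[OF assms] by metis
  show ?thesis
    unfolding eventually_sequentially
  proof (intro exI allI impI)
    fix n assume "h \<le> n"
    then show "A n z < 1/3" using decay[of "n - h"] m by simp
  qed
qed

lemma summable_poly_avlA_subcritical:
  assumes "0 < z" "subcritical z"
  shows "summable (\<lambda>h. A h z)"
proof -
  obtain h m where m: "0 \<le> m" "m < 1/3" and decay: "\<And>k. A (h + k + 1) z \<le> m * (3 * m) ^ k"
    using subcritical_geometric_decay[OF assms] by metis
  have "summable (\<lambda>k. A (k + (h + 1)) z)"
  proof (rule summable_comparison_test')
    show "summable (\<lambda>k. m * (3 * m) ^ k)"
      using m by (intro summable_mult summable_geometric) auto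
    show "norm (A (k + (h + 1)) z) \<le> m * (3 * m) ^ k" for k
      using decay[of k] poly_avlA_pos[OF assms(1), of "k + (h + 1)"] by (simp add: add_ac)
  qed
  then show ?thesis by (rule summable_iff_shift[THEN iffD1])
qed

lemma supercritical_eventually_above:
  assumes "0 < z" "supercritical z"
  shows "eventually (\<lambda>h. 1/3 < A h z) sequentially"
proof -
  obtain h where h: "1/3 < A h z" "1/3 < A (Suc h) z"
    using assms(2) by (auto simp: supercritical_def)
  have above: "1/3 < A (h + k) z \<and> 1/3 < A (h + k + 1) z" for k
  proof (induction k)
    case (Suc k)
    have "1/3 * 1 < A (h + k + 1) z * (A (h + k + 1) z + 2 * A (h + k) z)"
      using Suc by (intro mult_strict_mono) auto
    then show ?case using Suc by (simp add: numeral_2_eq_2)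
  qed (use h in simp)
  show ?thesis
    unfolding eventually_sequentially
    using above[of "_ - h"] by (metis le_add_diff_inverse)
qed

lemma subcritical_less_supercritical:
  assumes "0 < z" "subcritical z" "0 < w" "supercritical w"
  shows "z < w"
proof -
  have "eventually (\<lambda>h. A h z < 1/3 \<and> 1/3 < A h w) sequentially"
    using subcritical_eventually_below[OF assms(1,2)] supercritical_eventually_above[OF assms(3,4)]
    by eventually_elim auto
  then obtain N where "\<forall>h\<ge>N. A h z < 1/3 \<and> 1/3 < A h w"
    by (auto simp: eventually_sequentially)
  then have "A N z < A N w" by auto
  then show ?thesis
    using poly_avlA_mono[of w z N] assms(3) by force
qed

lemma not_supercritical_le_1:
  assumes "0 \<le> z" "\<not> supercritical z"
  shows "A h z \<le> 1"
proof (rule ccontr)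
  assume "\<not> A h z \<le> 1"
  then have "1 < A h z ^ 2" by simp
  also have "\<dots> \<le> A (Suc h) z" using assms(1) by (rule poly_avlA_Suc_ge_square)
  finally have "1/3 < A h z \<and> 1/3 < A (Suc h) z"
    using \<open>\<not> A h z \<le> 1\<close> by linarith
  then show False
    using assms(2) unfolding supercritical_def by blast
qed

lemma not_subcritical_ge:
  assumes "0 < z" "\<not> subcritical z" "\<And>h. A h z \<le> 1"
  shows "min z (1/9) \<le> A h z"
proof (cases h)
  case (Suc k)
  show ?thesis
  proof (cases "1/3 \<le> A (Suc k) z")
    case False
    have "\<not> (A (Suc k) z < 1/3 \<and> A (Suc (Suc k)) z < 1/3)"
      using assms(2) unfolding subcritical_def by blast
    with False have "1/3 \<le> A (Suc (Suc k)) z" by linarith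
    also have "A (Suc (Suc k)) z \<le> A (Suc k) z * 3"
      using assms(3)[of k] assms(3)[of "Suc k"] poly_avlA_pos[OF assms(1), of "Suc k"]
      by (simp add: mult_left_mono)
    finally show ?thesis using Suc by simp
  qed (use Suc in simp)
qed simp

lemma subcritical_or_supercritical:
  assumes "0 < z" "z < w"
  shows "subcritical z \<or> supercritical w"
proof (rule ccontr)
  assume neither: "\<not> (subcritical z \<or> supercritical w)"
  then have upper: "A h w \<le> 1" for h
    using not_supercritical_le_1 assms by simp
  have "A h z \<le> 1" for h
    using poly_avlA_mono[of z w h] upper[of h] assms by simp
  then have lower: "min z (1/9) \<le> A h z" for h
    using not_subcritical_ge neither assms(1) by blast
  define q where "q = w / z"
  have q: "1 < q" "q * z = w" using assms by (auto simp: q_def)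
  obtain n where n: "1 / min z (1/9) < q ^ n"
    using real_arch_pow[OF q(1)] by blast
  have "1 < q ^ n * min z (1/9)"
    using n assms(1) by (simp add: field_simps)
  also have "\<dots> \<le> q ^ (n + 1) * A n z"
    using lower[of n] q(1) assms(1) by (intro mult_mono power_increasing) auto
  also have "\<dots> \<le> A n w"
    using poly_avlA_scale[of q z n] q assms(1) by simp
  finally show False using upper[of n] by simp
qed

text \<open>Stated with index equations so that it applies to numeral indices.\<close>
lemma poly_avlA_le_step:
  assumes "0 \<le> z" "A h z \<le> a" "A k z \<le> b" "k = Suc h" "m = Suc k" "b * (b + 2 * a) \<le> c"
  shows "A m z \<le> c"
proof -
  have "0 \<le> b" using assms(3) poly_avlA_nonneg[OF assms(1), of k] by linarith
  have "A m z = A k z * (A k z + 2 * A h z)" using assms(4,5) by simp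
  also have "\<dots> \<le> b * (b + 2 * a)"
    using assms(2,3) \<open>0 \<le> b\<close> poly_avlA_nonneg[OF assms(1), of k]
      poly_avlA_nonneg[OF assms(1), of h]
    by (intro mult_mono add_mono) auto
  finally show ?thesis using assms(6) by linarith
qed

lemma poly_avlA_ge_step:
  assumes "0 \<le> z" "a \<le> A h z" "b \<le> A k z" "k = Suc h" "m = Suc k" "0 \<le> a" "0 \<le> b"
    "c \<le> b * (b + 2 * a)"
  shows "c \<le> A m z"
proof -
  have "b * (b + 2 * a) \<le> A k z * (A k z + 2 * A h z)"
    using assms(2,3,6,7) by (intro mult_mono add_mono) auto
  also have "\<dots> = A m z" using assms(4,5) by simp
  finally show ?thesis using assms(8) by linarith
qed

lemma subcritical_0_5219: "subcritical 0.5219"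
proof -
  define z :: real where "z = 0.5219"
  have z: "0 \<le> z" by (simp add: z_def)
  have x0: "A 0 z \<le> 0.52190000000000" by (simp add: z_def)
  have x1: "A 1 z \<le> 0.27237961000000" by (simp add: z_def power2_eq_square)
  have x2: "A 2 z \<le> 0.35850048886176" by (rule poly_avlA_le_step[OF z x0 x1]) simp_all
  have x3: "A 3 z \<le> 0.32381904719608" by (rule poly_avlA_le_step[OF z x1 x2]) simp_all
  have x4: "A 4 z \<le> 0.33703734877207" by (rule poly_avlA_le_step[OF z x2 x3]) simp_all
  have x5: "A 5 z \<le> 0.33187240076504" by (rule poly_avlA_le_step[OF z x3 x4]) simp_all
  have x6: "A 6 z \<le> 0.33384607855850" by (rule poly_avlA_le_step[OF z x4 x5]) simp_all
  have x7: "A 7 z \<le> 0.33304180332330" by (rule poly_avlA_le_step[OF z x5 x6]) simp_all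
  have x8: "A 8 z \<le> 0.33328624283191" by (rule poly_avlA_le_step[OF z x6 x7]) simp_all
  have "A 7 z < 1/3 \<and> A (Suc 7) z < 1/3" using x7 x8 by simp
  then show ?thesis unfolding subcritical_def z_def by blast
qed

lemma supercritical_0_52191: "supercritical 0.52191"
proof -
  define z :: real where "z = 0.52191"
  have z: "0 \<le> z" by (simp add: z_def)
  have x0: "0.52191000000000 \<le> A 0 z" by (simp add: z_def)
  have x1: "0.27239004810000 \<le> A 1 z" by (simp add: z_def power2_eq_square)
  have x2: "0.35852251831166 \<le> A 2 z" by (rule poly_avlA_ge_step[OF z x0 x1]) simp_all
  have x3: "0.32385432815222 \<le> A 3 z" by (rule poly_avlA_ge_step[OF z x1 x2]) simp_all
  have x4: "0.33709976445345 \<le> A 4 z" by (rule poly_avlA_ge_step[OF z x2 x3]) simp_all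
  have x5: "0.33197868666925 \<le> A 5 z" by (rule poly_avlA_ge_step[OF z x3 x4]) simp_all
  have x6: "0.33402972256217 \<le> A 6 z" by (rule poly_avlA_ge_step[OF z x4 x5]) simp_all
  have x7: "0.33335735276432 \<le> A 7 z" by (rule poly_avlA_ge_step[OF z x5 x6]) simp_all
  have "1/3 < A 6 z \<and> 1/3 < A (Suc 6) z" using x6 x7 by simp
  then show ?thesis unfolding supercritical_def z_def by blast
qed

definition avl_critical :: real where
  "avl_critical = Sup {z. 0 < z \<and> subcritical z}"

lemma bdd_above_subcritical: "bdd_above {z. 0 < z \<and> subcritical z}"
  using subcritical_less_supercritical[OF _ _ _ supercritical_0_52191]
  by (intro bdd_aboveI[of _ "0.52191"]) (auto intro: less_imp_le)

lemma subcritical_set_nonempty: "{z. 0 < z \<and> subcritical z} \<noteq> {}"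
  using subcritical_0_5219 by (auto intro!: exI[of _ "0.5219"])

lemma avl_critical_bounds: "0.5219 \<le> avl_critical" "avl_critical \<le> 0.52191"
proof -
  show "0.5219 \<le> avl_critical"
    unfolding avl_critical_def
    by (rule cSup_upper[OF _ bdd_above_subcritical]) (use subcritical_0_5219 in simp)
  show "avl_critical \<le> 0.52191"
    unfolding avl_critical_def using subcritical_less_supercritical[OF _ _ _ supercritical_0_52191]
    by (intro cSup_least[OF subcritical_set_nonempty]) (auto intro: less_imp_le)
qed

lemma avl_critical_pos: "0 < avl_critical"
  using avl_critical_bounds(1) by simp

lemma exists_subcritical_above:
  assumes "e < avl_critical"
  obtains s where "e < s" "0 < s" "subcritical s"
  using less_cSupD[OF subcritical_set_nonempty, of e] assms that
  by (auto simp: avl_critical_def)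

lemma supercritical_above_critical:
  assumes "avl_critical < w"
  shows "supercritical w"
proof -
  define z where "z = (avl_critical + w) / 2"
  have z: "avl_critical < z" "z < w" "0 < z"
    using assms avl_critical_pos by (auto simp: z_def)
  have "\<not> subcritical z"
    using cSup_upper[OF _ bdd_above_subcritical, of z] z by (auto simp: avl_critical_def)
  then show ?thesis
    using subcritical_or_supercritical[OF z(3,2)] by simp
qed

lemma avl_alpha_tendsto: "avl_alpha \<longlonglongrightarrow> avl_critical"
proof (rule order_tendstoI)
  fix e assume "e < avl_critical"
  then obtain s where s: "e < s" "0 < s" "subcritical s"
    by (rule exists_subcritical_above)
  show "eventually (\<lambda>h. e < avl_alpha h) sequentially"
    using subcritical_eventually_below[OF s(2,3)]
  proof eventually_elim
    case (elim h)
    then show ?case using less_avl_alphaI[of s h] s by simp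
  qed
next
  fix w assume "avl_critical < w"
  then have "0 < w" "supercritical w"
    using avl_critical_pos supercritical_above_critical by auto
  then have "eventually (\<lambda>h. 1/3 < A h w) sequentially"
    by (rule supercritical_eventually_above)
  then show "eventually (\<lambda>h. avl_alpha h < w) sequentially"
    by eventually_elim (use \<open>0 < w\<close> in \<open>simp add: avl_alpha_lessI\<close>)
qed

lemma log2_inverse_ge:
  assumes "0 < a" "0 < n" "(2 * a) ^ n \<le> (2::real) ^ m"
  shows "1 - real m / real n \<le> log 2 (1 / a)"
proof -
  have "real n * (1 + log 2 a) = log 2 ((2 * a) ^ n)"
    using assms(1) by (simp add: log_nat_power log_mult distrib_left)
  also have "\<dots> \<le> log 2 (2 ^ m)"
    using assms by (subst log_le_cancel_iff) auto
  finally have "real n * (1 + log 2 a) \<le> real m" by simp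
  then show ?thesis
    using assms(1,2) by (simp add: log_divide field_simps)
qed

lemma log2_inverse_less:
  assumes "0 < a" "0 < n" "(2::real) ^ m < (2 * a) ^ n"
  shows "log 2 (1 / a) < 1 - real m / real n"
proof -
  have "real m = log 2 (2 ^ m)" by simp
  also have "\<dots> < log 2 ((2 * a) ^ n)"
    using assms by (subst log_less_cancel_iff) auto
  also have "\<dots> = real n * (1 + log 2 a)"
    using assms(1) by (simp add: log_nat_power log_mult distrib_left)
  finally have "real m < real n * (1 + log 2 a)" .
  then show ?thesis
    using assms(1,2) by (simp add: log_divide field_simps)
qed

lemma power_le_via_base: "0 \<le> (x::real) \<Longrightarrow> x \<le> a \<Longrightarrow> a ^ n \<le> b \<Longrightarrow> x ^ n \<le> b"
  using power_mono[of x a n] by linarith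

lemma power_ge_via_base: "0 \<le> (a::real) \<Longrightarrow> a \<le> x \<Longrightarrow> b \<le> a ^ n \<Longrightarrow> b \<le> x ^ n"
  using power_mono[of a x n] by linarith

lemma power_500_le: "0 \<le> (x::real) \<Longrightarrow> x \<le> 1.04382 \<Longrightarrow> x ^ 500 \<le> 2 ^ 31"
proof -
  assume x: "0 \<le> x" "x \<le> 1.04382"
  have "x ^ 4 \<le> 1.18714141286273"
    by (rule power_le_via_base[OF x]) (simp add: power_divide)
  then have "(x ^ 4) ^ 5 \<le> 2.35782884826425"
    by (rule power_le_via_base[rotated]) (use x in \<open>simp_all add: power_divide\<close>)
  then have "((x ^ 4) ^ 5) ^ 5 \<le> 72.87211679899287"
    by (rule power_le_via_base[rotated]) (use x in \<open>simp_all add: power_divide\<close>)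
  then have "(((x ^ 4) ^ 5) ^ 5) ^ 5 \<le> 2 ^ 31"
    by (rule power_le_via_base[rotated]) (use x in \<open>simp_all add: power_divide\<close>)
  then show ?thesis by (simp flip: power_mult)
qed

lemma power_1000_gt: "1.0438 \<le> (x::real) \<Longrightarrow> 2 ^ 61 < x ^ 1000"
proof -
  assume x: "1.0438 \<le> x"
  have "1.40908872597477 \<le> x ^ 8"
    by (rule power_ge_via_base[OF _ x]) (simp_all add: power_divide)
  then have "5.55509769106354 \<le> (x ^ 8) ^ 5"
    by (rule power_ge_via_base[rotated]) (simp_all add: power_divide)
  then have "5290.03449399499587 \<le> ((x ^ 8) ^ 5) ^ 5"
    by (rule power_ge_via_base[rotated]) (simp_all add: power_divide)
  then have "5290.03449399499587 ^ 5 \<le> (((x ^ 8) ^ 5) ^ 5) ^ 5"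
    by (rule power_ge_via_base[rotated]) (simp_all add: power_divide)
  moreover have "(2::real) ^ 61 < 5290.03449399499587 ^ 5"
    by (simp add: power_divide)
  ultimately show ?thesis by (simp flip: power_mult)
qed

lemma avl_critical_log_bounds:
  "0.938 \<le> log 2 (1 / avl_critical)" "log 2 (1 / avl_critical) < 0.939"
proof -
  have "(2 * avl_critical) ^ 500 \<le> 2 ^ 31"
    using avl_critical_bounds avl_critical_pos by (intro power_500_le) auto
  from log2_inverse_ge[OF avl_critical_pos _ this]
  show "0.938 \<le> log 2 (1 / avl_critical)" by simp
  have "2 ^ 61 < (2 * avl_critical) ^ 1000"
    using avl_critical_bounds by (intro power_1000_gt) auto
  from log2_inverse_less[OF avl_critical_pos _ this]
  show "log 2 (1 / avl_critical) < 0.939" by simp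
qed

lemma coeff_avlA_nonneg: "0 \<le> coeff (avlA h) n"
proof (induction h arbitrary: n rule: avlA.induct)
  case 1
  then show ?case by (auto simp: coeff_pCons split: nat.splits)
next
  case 2
  then show ?case by (auto simp: coeff_pCons split: nat.splits)
next
  case (3 h)
  then show ?case
    by (auto simp: coeff_mult intro!: sum_nonneg mult_nonneg_nonneg add_nonneg_nonneg)
qed

lemma coeff_mult_add_pos:
  fixes p q :: "'a::linordered_semidom poly"
  assumes "\<And>i. 0 \<le> coeff p i" "\<And>i. 0 \<le> coeff q i" "0 < coeff p a" "0 < coeff q b"
  shows "0 < coeff (p * q) (a + b)"
proof -
  have "0 < coeff p a * coeff q (a + b - a)" using assms by simp
  also have "\<dots> \<le> (\<Sum>i\<le>a + b. coeff p i * coeff q (a + b - i))"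
    by (rule member_le_sum) (use assms in auto)
  finally show ?thesis by (simp add: coeff_mult)
qed

lemma coeff_le_poly:
  fixes p :: "'a::linordered_semidom poly"
  assumes "\<And>i. 0 \<le> coeff p i" "0 \<le> z"
  shows "coeff p n * z ^ n \<le> poly p z"
proof (cases "n \<le> degree p")
  case True
  have "coeff p n * z ^ n \<le> (\<Sum>i\<le>degree p. coeff p i * z ^ i)"
    by (rule member_le_sum) (use True assms in auto)
  then show ?thesis by (simp add: poly_altdef)
next
  case False
  then show ?thesis
    unfolding poly_altdef using assms by (auto simp: coeff_eq_0 intro!: sum_nonneg)
qed

text \<open>The hypotheses say 2^(h-1) < n \<le> 2^h, written without truncated subtraction for h = 0.\<close>
lemma coeff_avlA_pos: "2 ^ h < 2 * n \<Longrightarrow> n \<le> 2 ^ h \<Longrightarrow> 0 < coeff (avlA h) n"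
proof (induction h arbitrary: n rule: avlA.induct)
  case 1
  then have "n = 1" by simp
  then show ?case by simp
next
  case 2
  then have "n = 2" by simp
  then show ?case by (simp add: numeral_2_eq_2)
next
  case (3 h)
  define N :: nat where "N = 2 ^ h"
  have n: "2 * N < n" "n \<le> 4 * N" and "0 < N"
    using "3.prems" by (simp_all add: N_def)
  have split: "coeff (avlA (Suc (Suc h))) n
      = coeff (avlA (Suc h) * avlA (Suc h)) n + 2 * coeff (avlA (Suc h) * avlA h) n"
    by (simp add: distrib_left mult_smult_right)
  have nonneg: "0 \<le> coeff (avlA k * avlA j) n" for k j
    by (auto simp: coeff_mult coeff_avlA_nonneg intro!: sum_nonneg)
  show ?case
  proof (cases "n = 2 * N + 1")
    case True
    have "0 < coeff (avlA (Suc h) * avlA h) ((N + 1) + N)"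
      using "3.IH" \<open>0 < N\<close> by (intro coeff_mult_add_pos coeff_avlA_nonneg) (auto simp: N_def)
    moreover have "(N + 1) + N = n" using True by simp
    ultimately show ?thesis using split nonneg[of "Suc h" "Suc h"] by simp
  next
    case False
    have "0 < coeff (avlA (Suc h) * avlA (Suc h)) (n div 2 + (n - n div 2))"
      using "3.IH" n False by (intro coeff_mult_add_pos coeff_avlA_nonneg) (auto simp: N_def)
    then show ?thesis using split nonneg[of "Suc h" h] by simp
  qed
qed

lemma coeff_avlA_pos_ex:
  assumes "1 \<le> n"
  obtains h where "0 < coeff (avlA h) n"
proof -
  have "1 \<le> 2 * n - 1" using assms by simp
  then obtain h :: nat where h: "2 ^ h \<le> 2 * n - 1" "2 * n - 1 < 2 ^ (h + 1)"
    using ex_power_ivl1[of 2 "2 * n - 1"] by auto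
  then have "2 ^ h < 2 * n" "n \<le> 2 ^ h" using assms by auto
  then show ?thesis using coeff_avlA_pos that by blast
qed

lemma summable_coeff_avlA: "summable (\<lambda>h. coeff (avlA h) n)"
proof (rule summable_comparison_test)
  define s :: real where "s = 0.5219"
  have s: "0 < s" "subcritical s" using subcritical_0_5219 by (simp_all add: s_def)
  have "coeff (avlA h) n * s ^ n \<le> A h s" for h
    by (rule coeff_le_poly) (use coeff_avlA_nonneg s in auto)
  then show "\<exists>N. \<forall>h\<ge>N. norm (coeff (avlA h) n) \<le> A h s / s ^ n"
    using s(1) coeff_avlA_nonneg by (auto simp: field_simps)
  show "summable (\<lambda>h. A h s / s ^ n)"
    using summable_poly_avlA_subcritical[OF s] by (rule summable_divide)
qed

lemma avl_a_mult_power_le: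
  assumes "0 < s" "subcritical s"
  shows "avl_a n * s ^ n \<le> (\<Sum>h. A h s)"
proof -
  have "avl_a n * s ^ n = (\<Sum>h. coeff (avlA h) n * s ^ n)"
    unfolding avl_a_def using summable_coeff_avlA by (rule suminf_mult2)
  also have "\<dots> \<le> (\<Sum>h. A h s)"
  proof (rule suminf_le)
    show "coeff (avlA h) n * s ^ n \<le> A h s" for h
      by (rule coeff_le_poly) (use coeff_avlA_nonneg assms in auto)
  qed (use summable_coeff_avlA summable_mult2 summable_poly_avlA_subcritical[OF assms] in auto)
  finally show ?thesis .
qed

lemma avl_a_nonneg: "0 \<le> avl_a n"
  unfolding avl_a_def by (rule suminf_nonneg[OF summable_coeff_avlA coeff_avlA_nonneg])

lemma avl_a_pos: "1 \<le> n \<Longrightarrow> 0 < avl_a n"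
proof -
  assume "1 \<le> n"
  then obtain h where "0 < coeff (avlA h) n" by (rule coeff_avlA_pos_ex)
  then show ?thesis
    unfolding avl_a_def using coeff_avlA_nonneg
    by (intro suminf_pos2[OF summable_coeff_avlA]) auto
qed

lemma avl_a_subexponential:
  assumes "1 < \<rho>"
  obtains C where "\<And>n. avl_a n * avl_critical ^ n \<le> C * \<rho> ^ n"
proof -
  have "avl_critical / \<rho> < avl_critical"
    using assms avl_critical_pos by (simp add: divide_less_eq)
  then obtain s where s: "avl_critical / \<rho> < s" "0 < s" "subcritical s"
    by (rule exists_subcritical_above)
  have ratio: "0 \<le> avl_critical / s" "avl_critical / s \<le> \<rho>"
    using s assms avl_critical_pos by (auto simp: field_simps)
  have sum_nonneg: "0 \<le> (\<Sum>h. A h s)"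
    using summable_poly_avlA_subcritical[OF s(2,3)] poly_avlA_nonneg s(2) by (simp add: suminf_nonneg)
  have "avl_a n * avl_critical ^ n \<le> (\<Sum>h. A h s) * \<rho> ^ n" for n
  proof -
    have "avl_a n * avl_critical ^ n = (avl_a n * s ^ n) * (avl_critical / s) ^ n"
      using s(2) by (simp add: power_divide)
    also have "\<dots> \<le> (\<Sum>h. A h s) * \<rho> ^ n"
      using avl_a_mult_power_le[OF s(2,3)] avl_a_nonneg s(2) ratio sum_nonneg
      by (intro mult_mono power_mono) (auto intro: order_trans[rotated])
    finally show ?thesis .
  qed
  then show ?thesis by (rule that)
qed

lemma power_smallo_power:
  fixes r \<kappa> :: real
  assumes "0 \<le> r" "r < \<kappa>"
  shows "(\<lambda>n. r ^ n) \<in> o(\<lambda>n. \<kappa> ^ n)"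
proof (rule smalloI_tendsto)
  show "(\<lambda>n. r ^ n / \<kappa> ^ n) \<longlonglongrightarrow> 0"
    using assms by (simp add: power_divide[symmetric] LIMSEQ_power_zero)
  show "eventually (\<lambda>n. \<kappa> ^ n \<noteq> 0) sequentially"
    using assms by simp
qed

text \<open>The exponent 1 / ln 2 matches the theorem, which compares ln theta with log 2 of a_n.\<close>
lemma avl_theta_bigo:
  assumes "1 < \<rho>"
  shows "(\<lambda>n. (avl_a n * avl_critical ^ n) powr (1 / ln 2)) \<in> O(\<lambda>n. \<rho> ^ n)"
proof -
  obtain C where C: "\<And>n. avl_a n * avl_critical ^ n \<le> C * (\<rho> powr ln 2) ^ n"
    using avl_a_subexponential[of "\<rho> powr ln 2"] assms by auto
  have "(avl_a n * avl_critical ^ n) powr (1 / ln 2) \<le> C powr (1 / ln 2) * \<rho> ^ n" for n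
  proof -
    have "(avl_a n * avl_critical ^ n) powr (1 / ln 2) \<le> (C * (\<rho> powr ln 2) ^ n) powr (1 / ln 2)"
      using C[of n] avl_a_nonneg avl_critical_pos by (intro powr_mono2) auto
    also have "\<dots> = C powr (1 / ln 2) * \<rho> ^ n"
      using assms by (simp add: powr_mult powr_power powr_powr powr_realpow)
    finally show ?thesis .
  qed
  then show ?thesis
    using assms by (intro bigoI[of _ "C powr (1 / ln 2)"]) auto
qed

theorem theorem2:
  shows "\<exists>\<alpha>::real. avl_alpha \<longlonglongrightarrow> \<alpha>
     \<and> 0.5219 \<le> \<alpha> \<and> \<alpha> < 0.5220
     \<and> 0.938 \<le> log 2 (1 / \<alpha>) \<and> log 2 (1 / \<alpha>) < 0.939
     \<and> (\<exists>\<theta>::nat \<Rightarrow> real.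
          (\<forall>n\<ge>1. avl_a n > 0 \<and> \<theta> n > 0 \<and>
                   log 2 (avl_a n) = real n * log 2 (1 / \<alpha>) + ln (\<theta> n))
        \<and> (\<forall>\<kappa>::real. \<kappa> > 1 \<longrightarrow> \<theta> \<in> o(\<lambda>n. \<kappa> ^ n)))"
proof -
  define \<theta> where "\<theta> n = (avl_a n * avl_critical ^ n) powr (1 / ln 2)" for n
  have log_a: "log 2 (avl_a n) = real n * log 2 (1 / avl_critical) + ln (\<theta> n)"
    if "1 \<le> n" for n
    using avl_a_pos[OF that] avl_critical_pos
    by (simp add: \<theta>_def log_def ln_mult ln_realpow ln_div field_simps)
  have \<theta>_pos: "0 < \<theta> n" if "1 \<le> n" for n
    using avl_a_pos[OF that] avl_critical_pos by (simp add: \<theta>_def)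
  have \<theta>_subexponential: "\<theta> \<in> o(\<lambda>n. \<kappa> ^ n)" if "1 < \<kappa>" for \<kappa> :: real
  proof (rule landau_o.big_small_trans)
    show "\<theta> \<in> O(\<lambda>n. ((1 + \<kappa>) / 2) ^ n)"
      unfolding \<theta>_def using that by (intro avl_theta_bigo) simp
    show "(\<lambda>n. ((1 + \<kappa>) / 2) ^ n) \<in> o(\<lambda>n. \<kappa> ^ n)"
      using that by (intro power_smallo_power) auto
  qed
  show ?thesis
    using avl_alpha_tendsto avl_critical_bounds avl_critical_log_bounds avl_a_pos log_a
      \<theta>_pos \<theta>_subexponential
    by (intro exI[of _ avl_critical]) (auto intro!: exI[of _ \<theta>])
qed

end
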